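(* Let $\mathcal{Z}=\{(S_q,\gamma_q)\}_{q\in[Q]}$ be a buyer-optimal signaling scheme for $\mathcal{D}$, and let $p$ be a price maximizing $p\cdot G_{\mathcal{D}}(p)$. Then for every $q$ with $\gamma_q>0$, the price $p$ also maximizes $p'\cdot G_{S_q}(p')$ over $p'\ge 0$.
   Context: Values and prior. $0<v_1<\dots<v_n$ are reals, and $\mathcal{D}$ is a distribution on $\{v_1,\dots,v_n\}$ with $f_{\mathcal{D}}(v_i)>0$. For a distribution $S$, $G_S(p)=\Pr_{v\sim S}[v\ge p]$. Signals and pricing. A signal is a distribution $S$ on these values. The seller posts $p^*_S$, the smallest $v$ in the support of $S$ maximizing $v\,G_S(v)$. The surplus of value $v$ is $cs_v(S)=\mathbb{1}[v\ge p^*_S](v-p^*_S)$. Signaling schemes. A signaling scheme is $\mathcal{Z}=\{(S_q,\gamma_q)\}$ with $\gamma_q\ge0$, $\sum\gamma_q=1$ and $\sum_q\gamma_q f_{S_q}=f_{\mathcal{D}}$. Its expected consumer surplus at $v_i$ is $cs_{v_i}(\mathcal{Z})=\sum_q cs_{v_i}(S_q)\gamma_q f_{S_q}(v_i)/f_{\mathcal{D}}(v_i)$. $\mathcal{Z}$ is buyer-optimal if \[\sum_i f_{\mathcal{D}}(v_i)\,cs_{v_i}(\mathcal{Z})=\sum_i f_{\mathcal{D}}(v_i)\,v_i-\max_p p\,G_{\mathcal{D}}(p).\] *)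

theory Defs
  imports Complex_Main
begin

definition is_dist :: "real set \<Rightarrow> (real \<Rightarrow> real) \<Rightarrow> bool" where
  "is_dist V f \<longleftrightarrow> (\<forall>x\<in>V. f x \<ge> 0) \<and> (\<forall>x. x \<notin> V \<longrightarrow> f x = 0) \<and> (\<Sum>x\<in>V. f x) = 1"

definition G :: "real set \<Rightarrow> (real \<Rightarrow> real) \<Rightarrow> real \<Rightarrow> real" where
  "G V f p = (\<Sum>x\<in>{x\<in>V. x \<ge> p}. f x)"

definition supp :: "real set \<Rightarrow> (real \<Rightarrow> real) \<Rightarrow> real set" where
  "supp V f = {x\<in>V. f x > 0}"

definition post_price :: "real set \<Rightarrow> (real \<Rightarrow> real) \<Rightarrow> real" where
  "post_price V f = Min {v\<in>supp V f. \<forall>w\<in>supp V f. w * G V f w \<le> v * G V f v}"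

definition cs :: "real set \<Rightarrow> (real \<Rightarrow> real) \<Rightarrow> real \<Rightarrow> real" where
  "cs V f v = (if v \<ge> post_price V f then v - post_price V f else 0)"

definition is_scheme :: "real set \<Rightarrow> (real \<Rightarrow> real) \<Rightarrow> nat \<Rightarrow> (nat \<Rightarrow> real \<Rightarrow> real) \<Rightarrow> (nat \<Rightarrow> real) \<Rightarrow> bool" where
  "is_scheme V fD Q S \<gamma> \<longleftrightarrow>
     (\<forall>q<Q. is_dist V (S q) \<and> \<gamma> q \<ge> 0) \<and> (\<Sum>q<Q. \<gamma> q) = 1 \<and>
     (\<forall>x\<in>V. (\<Sum>q<Q. \<gamma> q * S q x) = fD x)"

definition cs_scheme :: "real set \<Rightarrow> (real \<Rightarrow> real) \<Rightarrow> nat \<Rightarrow> (nat \<Rightarrow> real \<Rightarrow> real) \<Rightarrow> (nat \<Rightarrow> real) \<Rightarrow> real \<Rightarrow> real" where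
  "cs_scheme V fD Q S \<gamma> v = (\<Sum>q<Q. cs V (S q) v * \<gamma> q * S q v / fD v)"

definition buyer_optimal :: "real set \<Rightarrow> (real \<Rightarrow> real) \<Rightarrow> nat \<Rightarrow> (nat \<Rightarrow> real \<Rightarrow> real) \<Rightarrow> (nat \<Rightarrow> real) \<Rightarrow> bool" where
  "buyer_optimal V fD Q S \<gamma> \<longleftrightarrow> is_scheme V fD Q S \<gamma> \<and>
     (\<Sum>v\<in>V. fD v * cs_scheme V fD Q S \<gamma> v) =
       (\<Sum>v\<in>V. fD v * v) - (SUP p\<in>{0..}. p * G V fD p)"

end

theory Submission
  imports Defs
begin

text \<open>Every signal S has a revenue-maximising price, its posted price, and its buyers' surplus
is at most welfare minus that maximal revenue; hence the surplus is at most welfare minus the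
revenue at p. Averaging over the signals with weights \<gamma>, surplus, welfare and the revenue at p
all average to the corresponding quantities for the prior, where buyer-optimality and the
optimality of p make the inequality tight. So it is tight for every signal of positive weight,
which means that p earns the maximal revenue of that signal.\<close>

lemma G_nonneg:
  assumes "is_dist V f"
  shows "G V f p \<ge> 0"
  using assms unfolding G_def is_dist_def by (auto intro: sum_nonneg)

lemma supp_nonempty:
  assumes "is_dist V f"
  shows "supp V f \<noteq> {}"
proof
  assume "supp V f = {}"
  then have "\<forall>x\<in>V. f x = 0"
    using assms unfolding supp_def is_dist_def by force
  then show False
    using assms unfolding is_dist_def by simp
qed

lemma post_price_in_supp_and_max:
  assumes "finite V" and "is_dist V f"
  shows "post_price V f \<in> supp V f"
    and "\<And>w. w \<in> supp V f \<Longrightarrow> w * G V f w \<le> post_price V f * G V f (post_price V f)"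
proof -
  let ?h = "\<lambda>v. v * G V f v"
  let ?M = "{v\<in>supp V f. \<forall>w\<in>supp V f. ?h w \<le> ?h v}"
  have fin_supp: "finite (supp V f)"
    using assms(1) unfolding supp_def by auto
  have "Max (?h ` supp V f) \<in> ?h ` supp V f"
    using fin_supp supp_nonempty[OF assms(2)] by simp
  then obtain m where m: "m \<in> supp V f" "Max (?h ` supp V f) = ?h m"
    by (rule imageE)
  have "m \<in> ?M"
    using m(1) m(2)[symmetric] fin_supp by auto
  moreover have "finite ?M"
    using fin_supp by simp
  ultimately have "post_price V f \<in> ?M"
    unfolding post_price_def using Min_in by blast
  then show "post_price V f \<in> supp V f" "\<And>w. w \<in> supp V f \<Longrightarrow> ?h w \<le> ?h (post_price V f)"
    by auto
qed

lemma G_eq_G_of_least_supp_above: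
  assumes "finite V" and "is_dist V f" and "{x\<in>supp V f. x \<ge> p} \<noteq> {}"
  shows "G V f p = G V f (Min {x\<in>supp V f. x \<ge> p})"
proof -
  let ?A = "{x\<in>supp V f. x \<ge> p}"
  have "finite ?A"
    using assms(1) unfolding supp_def by auto
  then have w: "Min ?A \<in> ?A" "\<And>x. x \<in> ?A \<Longrightarrow> Min ?A \<le> x"
    using Min_in assms(3) by auto
  show ?thesis
    unfolding G_def
  proof (rule sum.mono_neutral_right)
    show "finite {x\<in>V. p \<le> x}"
      using assms(1) by auto
    show "{x\<in>V. Min ?A \<le> x} \<subseteq> {x\<in>V. p \<le> x}"
      using w(1) by auto
    show "\<forall>x\<in>{x\<in>V. p \<le> x} - {x\<in>V. Min ?A \<le> x}. f x = 0"
    proof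
      fix x assume x: "x \<in> {x\<in>V. p \<le> x} - {x\<in>V. Min ?A \<le> x}"
      then have "x \<notin> supp V f"
        using w(2) by force
      then show "f x = 0"
        using x assms(2) unfolding supp_def is_dist_def by force
    qed
  qed
qed

lemma revenue_le_post_price_revenue:
  assumes "finite V" and "\<forall>v\<in>V. v > 0" and "is_dist V f"
  shows "p * G V f p \<le> post_price V f * G V f (post_price V f)"
proof (cases "{x\<in>supp V f. x \<ge> p} = {}")
  case True
  then have "G V f p = 0"
    using assms(3) unfolding G_def supp_def is_dist_def by (force intro: sum.neutral)
  moreover have "post_price V f > 0"
    using post_price_in_supp_and_max(1)[OF assms(1,3)] assms(2) unfolding supp_def by auto
  ultimately show ?thesis
    using G_nonneg[OF assms(3)] by simp
next
  case False
  let ?w = "Min {x\<in>supp V f. x \<ge> p}"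
  have "finite {x\<in>supp V f. x \<ge> p}"
    using assms(1) unfolding supp_def by auto
  then have w: "?w \<in> supp V f" "p \<le> ?w"
    using Min_in[OF _ False] by auto
  have "p * G V f p = p * G V f ?w"
    using G_eq_G_of_least_supp_above[OF assms(1,3) False] by simp
  also have "\<dots> \<le> ?w * G V f ?w"
    using w(2) G_nonneg[OF assms(3)] by (simp add: mult_right_mono)
  also have "\<dots> \<le> post_price V f * G V f (post_price V f)"
    using post_price_in_supp_and_max(2)[OF assms(1,3) w(1)] .
  finally show ?thesis .
qed

lemma surplus_le_welfare_minus_post_price_revenue:
  assumes "finite V" and "\<forall>v\<in>V. v > 0" and "is_dist V f"
  shows "(\<Sum>v\<in>V. f v * cs V f v)
    \<le> (\<Sum>v\<in>V. f v * v) - post_price V f * G V f (post_price V f)"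
proof -
  let ?P = "post_price V f"
  have "(\<Sum>v\<in>V. f v * cs V f v) \<le> (\<Sum>v\<in>V. f v * v - ?P * (if ?P \<le> v then f v else 0))"
  proof (rule sum_mono)
    fix v assume "v \<in> V"
    then have "f v \<ge> 0" "v > 0"
      using assms(2,3) unfolding is_dist_def by auto
    then show "f v * cs V f v \<le> f v * v - ?P * (if ?P \<le> v then f v else 0)"
      unfolding cs_def by (auto simp: algebra_simps)
  qed
  also have "\<dots> = (\<Sum>v\<in>V. f v * v) - ?P * G V f ?P"
    unfolding G_def using assms(1)
    by (simp add: sum.inter_filter sum_subtractf sum_distrib_left)
  finally show ?thesis .
qed

lemma scheme_average:
  assumes "is_scheme V fD Q S \<gamma>" and "A \<subseteq> V"
  shows "(\<Sum>v\<in>A. fD v * h v) = (\<Sum>r<Q. \<gamma> r * (\<Sum>v\<in>A. S r v * h v))"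
proof -
  have "fD v * h v = (\<Sum>r<Q. \<gamma> r * (S r v * h v))" if "v \<in> A" for v
  proof -
    have "fD v = (\<Sum>r<Q. \<gamma> r * S r v)"
      using assms that unfolding is_scheme_def by auto
    then show ?thesis
      by (simp add: sum_distrib_right mult.assoc)
  qed
  then have "(\<Sum>v\<in>A. fD v * h v) = (\<Sum>v\<in>A. \<Sum>r<Q. \<gamma> r * (S r v * h v))"
    by (rule sum.cong[OF refl])
  also have "\<dots> = (\<Sum>r<Q. \<gamma> r * (\<Sum>v\<in>A. S r v * h v))"
    by (subst sum.swap) (simp add: sum_distrib_left)
  finally show ?thesis .
qed

lemma G_scheme_average:
  assumes "is_scheme V fD Q S \<gamma>"
  shows "G V fD p = (\<Sum>r<Q. \<gamma> r * G V (S r) p)"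
  using scheme_average[OF assms, of "{x\<in>V. x \<ge> p}" "\<lambda>_. 1"] unfolding G_def by simp

lemma cs_scheme_average:
  assumes "\<forall>v\<in>V. fD v > 0"
  shows "(\<Sum>v\<in>V. fD v * cs_scheme V fD Q S \<gamma> v)
    = (\<Sum>r<Q. \<gamma> r * (\<Sum>v\<in>V. S r v * cs V (S r) v))"
proof -
  have "(\<Sum>v\<in>V. fD v * cs_scheme V fD Q S \<gamma> v) = (\<Sum>v\<in>V. \<Sum>r<Q. \<gamma> r * (S r v * cs V (S r) v))"
    using assms unfolding cs_scheme_def
    by (intro sum.cong) (auto simp: sum_distrib_left field_simps)
  also have "\<dots> = (\<Sum>r<Q. \<gamma> r * (\<Sum>v\<in>V. S r v * cs V (S r) v))"
    by (subst sum.swap) (simp add: sum_distrib_left)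
  finally show ?thesis .
qed

lemma buyer_optimal_weighted_slack_zero:
  assumes "\<forall>v\<in>V. fD v > 0" and "buyer_optimal V fD Q S \<gamma>"
    and "p \<ge> 0" and "\<forall>p'\<ge>0. p' * G V fD p' \<le> p * G V fD p"
  shows "(\<Sum>r<Q. \<gamma> r * ((\<Sum>v\<in>V. S r v * v) - p * G V (S r) p
    - (\<Sum>v\<in>V. S r v * cs V (S r) v))) = 0"
proof -
  have sch: "is_scheme V fD Q S \<gamma>"
    using assms(2) unfolding buyer_optimal_def by simp
  have "(SUP p\<in>{0..}. p * G V fD p) = p * G V fD p"
    using assms(3,4) by (intro cSup_eq_maximum) auto
  then have "(\<Sum>v\<in>V. fD v * cs_scheme V fD Q S \<gamma> v) = (\<Sum>v\<in>V. fD v * v) - p * G V fD p"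
    using assms(2) unfolding buyer_optimal_def by simp
  moreover have "(\<Sum>v\<in>V. fD v * v) = (\<Sum>r<Q. \<gamma> r * (\<Sum>v\<in>V. S r v * v))"
    using scheme_average[OF sch order_refl, of "\<lambda>v. v"] .
  moreover have "p * G V fD p = p * (\<Sum>r<Q. \<gamma> r * G V (S r) p)"
    using G_scheme_average[OF sch] by simp
  moreover have "(\<Sum>r<Q. \<gamma> r * ((\<Sum>v\<in>V. S r v * v) - p * G V (S r) p
      - (\<Sum>v\<in>V. S r v * cs V (S r) v)))
    = (\<Sum>r<Q. \<gamma> r * (\<Sum>v\<in>V. S r v * v)) - p * (\<Sum>r<Q. \<gamma> r * G V (S r) p)
      - (\<Sum>r<Q. \<gamma> r * (\<Sum>v\<in>V. S r v * cs V (S r) v))"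
    by (simp add: right_diff_distrib sum_subtractf sum_distrib_left mult.left_commute[of p])
  ultimately show ?thesis
    using cs_scheme_average[OF assms(1), where Q=Q and S=S and \<gamma>=\<gamma>] by linarith
qed

theorem lemma8:
  fixes V :: "real set" and fD :: "real \<Rightarrow> real" and Q :: nat
    and S :: "nat \<Rightarrow> real \<Rightarrow> real" and \<gamma> :: "nat \<Rightarrow> real" and p :: real
  assumes "finite V" and "V \<noteq> {}" and "\<forall>v\<in>V. v > 0"
    and "is_dist V fD" and "\<forall>v\<in>V. fD v > 0"
    and "buyer_optimal V fD Q S \<gamma>"
    and "p \<ge> 0" and "\<forall>p'\<ge>0. p' * G V fD p' \<le> p * G V fD p"
    and "q < Q" and "\<gamma> q > 0"
  shows "\<forall>p'\<ge>0. p' * G V (S q) p' \<le> p * G V (S q) p"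
proof -
  define R where "R r = post_price V (S r) * G V (S r) (post_price V (S r))" for r
  define slack where "slack r = (\<Sum>v\<in>V. S r v * v) - p * G V (S r) p
    - (\<Sum>v\<in>V. S r v * cs V (S r) v)" for r
  have dist: "is_dist V (S r)" and weight_nonneg: "\<gamma> r \<ge> 0" if "r < Q" for r
    using assms(6) that unfolding buyer_optimal_def is_scheme_def by auto
  have slack_ge: "slack r \<ge> R r - p * G V (S r) p" if "r < Q" for r
    using surplus_le_welfare_minus_post_price_revenue[OF assms(1,3) dist[OF that]]
    unfolding slack_def R_def by simp
  have "\<forall>r\<in>{..<Q}. 0 \<le> \<gamma> r * slack r"
  proof
    fix r assume "r \<in> {..<Q}"
    then have r: "r < Q" by simp
    have "p * G V (S r) p \<le> R r"
      using revenue_le_post_price_revenue[OF assms(1,3) dist[OF r]] unfolding R_def .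
    then show "0 \<le> \<gamma> r * slack r"
      using slack_ge[OF r] weight_nonneg[OF r] by simp
  qed
  moreover have "(\<Sum>r<Q. \<gamma> r * slack r) = 0"
    using buyer_optimal_weighted_slack_zero[OF assms(5-8)] unfolding slack_def .
  ultimately have "\<gamma> q * slack q = 0"
    using sum_nonneg_eq_0_iff[of "{..<Q}" "\<lambda>r. \<gamma> r * slack r"] assms(9) by simp
  then have "slack q = 0"
    using assms(10) by simp
  then have "R q \<le> p * G V (S q) p"
    using slack_ge[OF assms(9)] by simp
  then show ?thesis
    using revenue_le_post_price_revenue[OF assms(1,3) dist[OF assms(9)]] unfolding R_def
    by (meson order_trans)
qed

end
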